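(* Assume $M$ has genus zero and $a+b=1$ (so $a,b\in(0,1)$). Let $p=\frac{q'}{q'+a^{-1}-1}$. Then the marginal law of $\omega$ under $\mathbf P$ is $$\mathbf P(\omega)\propto (qq')^{k(\omega)}p^{|\omega|}(1-p)^{|\mathsf E\setminus\omega|},\qquad\omega\subseteq\mathsf E,$$ i.e. the $\mathrm{FK}(qq')$ random cluster model on $\mathsf G$ with parameter $p$ and free boundary conditions.
   Context: $M$ is the sphere or the plane. Let $\mathsf G=(\mathsf V,\mathsf E)$ be a finite connected graph embedded in $M$ with all faces topological discs, and $\mathsf G^*=(\mathsf U,\mathsf E^* )$ its embedded dual ($\mathsf U$ = faces of $\mathsf G$); $e^*$ is the dual edge crossing $e$, $\xi^*=\{e^*:e\in\xi\}$. Fix integers $q,q'\ge1$, finite $Q,Q'\subset\mathbb C$ with $Q=-Q$, $Q'=-Q'$, $|Q|=q$, $|Q'|=q'$, and $a,b\in(0,1]$. For $\sigma:\mathsf V\to Q$, $\eta(\sigma)\subseteq\mathsf E^*$ is the set of $e^*$ whose primal $e$ has endpoints with different $\sigma$-values; for $\sigma':\mathsf U\to Q'$, $\eta(\sigma')\subseteq\mathsf E$ is the set of $e$ whose dual $e^*$ has endpoints with different $\sigma'$-values. $\mathbf P(\sigma,\sigma')\propto a^{|\eta(\sigma')|}b^{|\eta(\sigma)|}$ on $\Sigma=\{(\sigma,\sigma'):\eta(\sigma)^*\cap\eta(\sigma')=\emptyset\}$. Percolation (here for $a+b=1$): given $(\sigma,\sigma')$, every edge of $\eta(\sigma')$ and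 every dual edge of $\eta(\sigma)$ is open; for each pair $(e,e^* )$ with $e\notin\eta(\sigma')$, $e^*\notin\eta(\sigma)$, independently, $e$ is open and $e^*$ closed with probability $1-b=a$, and $e$ closed and $e^*$ open with probability $1-a=b$. $\omega\subseteq\mathsf E$ is the set of open primal edges; $\mathbf P$ denotes the joint law. $k(\omega)$ is the number of connected components of $(\mathsf V,\omega)$, isolated vertices included. *)

theory Defs
  imports "HOL-Library.FuncSet" "HOL-Combinatorics.Permutations" Complex_Main
begin

text \<open>Combinatorial maps (rotation systems) encoding a finite connected graph
cellularly embedded in an orientable surface. The involution
map_alpha swaps the two darts of an edge, the permutation s (of the darts)
is the vertex rotation; vertices are the orbits of s, faces are the orbits of
s o map_alpha.  The surface has genus zero iff |V| - |E| + |U| = 2.\<close>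

definition darts :: "'e set \<Rightarrow> ('e \<times> bool) set" where
  "darts E = E \<times> (UNIV :: bool set)"

definition map_alpha :: "'e \<times> bool \<Rightarrow> 'e \<times> bool" where
  "map_alpha d = (fst d, \<not> snd d)"

definition orb :: "('a \<Rightarrow> 'a) \<Rightarrow> 'a \<Rightarrow> 'a set" where
  "orb f x = range (\<lambda>n. (f ^^ n) x)"

definition face_perm :: "('e \<times> bool \<Rightarrow> 'e \<times> bool) \<Rightarrow> 'e \<times> bool \<Rightarrow> 'e \<times> bool" where
  "face_perm s = s \<circ> map_alpha"

definition verts :: "'e set \<Rightarrow> ('e \<times> bool \<Rightarrow> 'e \<times> bool) \<Rightarrow> ('e \<times> bool) set set" where
  "verts E s = orb s ` darts E"

definition faces :: "'e set \<Rightarrow> ('e \<times> bool \<Rightarrow> 'e \<times> bool) \<Rightarrow> ('e \<times> bool) set set" where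
  "faces E s = orb (face_perm s) ` darts E"

text \<open>endpoints of a primal edge e, and endpoints of its dual edge e*\<close>
definition src :: "('e \<times> bool \<Rightarrow> 'e \<times> bool) \<Rightarrow> 'e \<Rightarrow> ('e \<times> bool) set" where
  "src s e = orb s (e, True)"
definition tgt :: "('e \<times> bool \<Rightarrow> 'e \<times> bool) \<Rightarrow> 'e \<Rightarrow> ('e \<times> bool) set" where
  "tgt s e = orb s (e, False)"
definition lface :: "('e \<times> bool \<Rightarrow> 'e \<times> bool) \<Rightarrow> 'e \<Rightarrow> ('e \<times> bool) set" where
  "lface s e = orb (face_perm s) (e, True)"
definition rface :: "('e \<times> bool \<Rightarrow> 'e \<times> bool) \<Rightarrow> 'e \<Rightarrow> ('e \<times> bool) set" where
  "rface s e = orb (face_perm s) (e, False)"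

definition adj :: "('e \<times> bool \<Rightarrow> 'e \<times> bool) \<Rightarrow> 'e set \<Rightarrow> (('e \<times> bool) set \<times> ('e \<times> bool) set) set" where
  "adj s \<omega> = {(src s e, tgt s e) | e. e \<in> \<omega>} \<union> {(tgt s e, src s e) | e. e \<in> \<omega>}"

definition ncomp :: "'e set \<Rightarrow> ('e \<times> bool \<Rightarrow> 'e \<times> bool) \<Rightarrow> 'e set \<Rightarrow> nat" where
  "ncomp E s \<omega> = card (verts E s // (adj s \<omega>)\<^sup>*)"

definition spherical_map :: "'e set \<Rightarrow> ('e \<times> bool \<Rightarrow> 'e \<times> bool) \<Rightarrow> bool" where
  "spherical_map E s \<longleftrightarrow> finite E \<and> s permutes darts E \<and> ncomp E s E = 1 \<and>
     int (card (verts E s)) - int (card E) + int (card (faces E s)) = 2"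

text \<open>etaP s sg = {e. e* \<in> eta(sg)} (primal labels of the dual edges in eta(sg));
      etaD s sg' = eta(sg') \<subseteq> E.\<close>
definition etaP :: "'e set \<Rightarrow> ('e \<times> bool \<Rightarrow> 'e \<times> bool) \<Rightarrow> (('e \<times> bool) set \<Rightarrow> complex) \<Rightarrow> 'e set" where
  "etaP E s sg = {e \<in> E. sg (src s e) \<noteq> sg (tgt s e)}"
definition etaD :: "'e set \<Rightarrow> ('e \<times> bool \<Rightarrow> 'e \<times> bool) \<Rightarrow> (('e \<times> bool) set \<Rightarrow> complex) \<Rightarrow> 'e set" where
  "etaD E s sg' = {e \<in> E. sg' (lface s e) \<noteq> sg' (rface s e)}"

text \<open>unnormalised weight of (sg, sg') (zero outside Sigma)\<close>
definition spin_weight :: "real \<Rightarrow> real \<Rightarrow> 'e set \<Rightarrow> ('e \<times> bool \<Rightarrow> 'e \<times> bool) \<Rightarrow>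
    (('e \<times> bool) set \<Rightarrow> complex) \<Rightarrow> (('e \<times> bool) set \<Rightarrow> complex) \<Rightarrow> real" where
  "spin_weight a b E s sg sg' =
     (if etaP E s sg \<inter> etaD E s sg' = {} then a ^ card (etaD E s sg') * b ^ card (etaP E s sg) else 0)"

text \<open>conditional probability of the set omega of open primal edges given (sg, sg')\<close>
definition perc_cond :: "real \<Rightarrow> real \<Rightarrow> 'e set \<Rightarrow> ('e \<times> bool \<Rightarrow> 'e \<times> bool) \<Rightarrow>
    (('e \<times> bool) set \<Rightarrow> complex) \<Rightarrow> (('e \<times> bool) set \<Rightarrow> complex) \<Rightarrow> 'e set \<Rightarrow> real" where
  "perc_cond a b E s sg sg' \<omega> =
     (\<Prod>e\<in>E. if e \<in> etaD E s sg' then (if e \<in> \<omega> then 1 else 0)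
             else if e \<in> etaP E s sg then (if e \<in> \<omega> then 0 else 1)
             else if e \<in> \<omega> then 1 - b else 1 - a)"

definition joint_weight where
  "joint_weight Q Q' a b E s \<omega> =
     (\<Sum>sg\<in>verts E s \<rightarrow>\<^sub>E Q. \<Sum>sg'\<in>faces E s \<rightarrow>\<^sub>E Q'.
        spin_weight a b E s sg sg' * perc_cond a b E s sg sg' \<omega>)"

definition omega_marginal :: "complex set \<Rightarrow> complex set \<Rightarrow> real \<Rightarrow> real \<Rightarrow> 'e set \<Rightarrow>
    ('e \<times> bool \<Rightarrow> 'e \<times> bool) \<Rightarrow> 'e set \<Rightarrow> real" where
  "omega_marginal Q Q' a b E s \<omega> =
     joint_weight Q Q' a b E s \<omega> / (\<Sum>\<omega>'\<in>Pow E. joint_weight Q Q' a b E s \<omega>')"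

definition fk_weight :: "real \<Rightarrow> real \<Rightarrow> 'e set \<Rightarrow> ('e \<times> bool \<Rightarrow> 'e \<times> bool) \<Rightarrow> 'e set \<Rightarrow> real" where
  "fk_weight qq p E s \<omega> = qq ^ ncomp E s \<omega> * p ^ card \<omega> * (1 - p) ^ card (E - \<omega>)"

definition fk_law :: "real \<Rightarrow> real \<Rightarrow> 'e set \<Rightarrow> ('e \<times> bool \<Rightarrow> 'e \<times> bool) \<Rightarrow> 'e set \<Rightarrow> real" where
  "fk_law qq p E s \<omega> = fk_weight qq p E s \<omega> / (\<Sum>\<omega>'\<in>Pow E. fk_weight qq p E s \<omega>')"

end

(* Given the configuration w of open primal edges, the joint weight of (sigma, sigma', w) vanishes
   unless sigma is constant on the clusters of w and sigma' is constant on the clusters of the dual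
   configuration E - w, and it then equals a^|w| b^|E - w| whatever the spins are. Summing out the
   spins, the marginal weight of w is q^k(w) q'^k'(E - w) a^|w| b^|E - w|, where k' counts clusters
   of the dual map. On the sphere k'(E - w) = k(w) + |w| - |V| + 1, which turns this weight into a
   constant multiple of (q q')^k(w) (q' a)^|w| b^|E - w|: the FK(q q') weight with p/(1 - p) = q' a/b.

   For the duality relation, Phi(w) = k'(E - w) - k(w) - |w| never increases when an edge e is
   added to w: either the endpoints of e are already connected in w, or the endpoints of its dual
   edge are connected in E - w - e. Connectivity of the map and of its dual and Euler's formula
   give Phi({}) = Phi(E) = 1 - |V|, so Phi is constant. *)

theory Submission
  imports Defs "HOL-Combinatorics.Orbits"
begin

lemma rtrancl_sym_Image_eq_iff:
  assumes "sym r"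
  shows "r\<^sup>* `` {x} = r\<^sup>* `` {y} \<longleftrightarrow> (x, y) \<in> r\<^sup>*"
  using sym_rtrancl[OF assms] by (auto dest: symD intro: rtrancl_trans)

lemma rtrancl_invariant:
  assumes "\<forall>(x, y) \<in> r. f x = f y" and "(x, y) \<in> r\<^sup>*"
  shows "f x = f y"
  using assms(2) by (induction rule: rtrancl_induct) (use assms(1) in auto)

lemma card_quotient_rtrancl_eq_1_iff:
  assumes "sym r"
  shows "card (A // r\<^sup>*) = 1 \<longleftrightarrow> A \<noteq> {} \<and> (\<forall>x \<in> A. \<forall>y \<in> A. (x, y) \<in> r\<^sup>*)"
proof
  assume "card (A // r\<^sup>*) = 1"
  then obtain X where X: "A // r\<^sup>* = {X}"
    by (rule card_1_singletonE)
  have "(x, y) \<in> r\<^sup>*" if "x \<in> A" "y \<in> A" for x y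
  proof -
    have "r\<^sup>* `` {x} = X" "r\<^sup>* `` {y} = X"
      using X quotientI[OF that(1), of "r\<^sup>*"] quotientI[OF that(2), of "r\<^sup>*"] by simp_all
    then show ?thesis
      using rtrancl_sym_Image_eq_iff[OF assms, of x y] by simp
  qed
  moreover have "A \<noteq> {}"
    using X by auto
  ultimately show "A \<noteq> {} \<and> (\<forall>x \<in> A. \<forall>y \<in> A. (x, y) \<in> r\<^sup>*)"
    by blast
next
  assume conn: "A \<noteq> {} \<and> (\<forall>x \<in> A. \<forall>y \<in> A. (x, y) \<in> r\<^sup>*)"
  then obtain x where x: "x \<in> A"
    by blast
  have "A // r\<^sup>* = {r\<^sup>* `` {x}}"
  proof
    show "A // r\<^sup>* \<subseteq> {r\<^sup>* `` {x}}"
    proof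
      fix C assume "C \<in> A // r\<^sup>*"
      then obtain y where "y \<in> A" "C = r\<^sup>* `` {y}"
        by (rule quotientE)
      then show "C \<in> {r\<^sup>* `` {x}}"
        using x conn rtrancl_sym_Image_eq_iff[OF assms, of y x] by simp
    qed
  qed (simp add: quotientI[OF x])
  then show "card (A // r\<^sup>*) = 1"
    by simp
qed

lemma rtrancl_insert_edge_cases:
  assumes "(x, y) \<in> (r \<union> {(u, v), (v, u)})\<^sup>*"
  shows "(x, y) \<in> r\<^sup>* \<or> (x, u) \<in> r\<^sup>* \<and> (v, y) \<in> r\<^sup>* \<or> (x, v) \<in> r\<^sup>* \<and> (u, y) \<in> r\<^sup>*"
  using assms
proof (induction rule: rtrancl_induct)
  case (step y z)
  from step.hyps(2) consider "(y, z) \<in> r" | "y = u" "z = v" | "y = v" "z = u"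
    by blast
  then show ?case
  proof cases
    case 1
    then show ?thesis using step.IH by (meson rtrancl_into_rtrancl)
  qed (use step.IH in auto)
qed simp

lemma rtrancl_Image_rtrancl_Image:
  assumes "r \<subseteq> r'"
  shows "r'\<^sup>* `` (r\<^sup>* `` X) = r'\<^sup>* `` X"
proof -
  have "r\<^sup>* O r'\<^sup>* \<subseteq> r'\<^sup>* O r'\<^sup>*"
    using rtrancl_mono[OF assms] by blast
  then have "r\<^sup>* O r'\<^sup>* \<subseteq> r'\<^sup>*"
    by (simp add: rtrancl_idemp_self_comp)
  then show ?thesis
    by (auto simp flip: relcomp_Image)
qed

lemma card_quotient_le_insert_edge:
  assumes "finite A" and "sym r" and "u \<in> A"
  shows "card (A // r\<^sup>*) \<le> card (A // (r \<union> {(u, v), (v, u)})\<^sup>*) + 1"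
proof -
  let ?R = "r\<^sup>*" and ?R' = "(r \<union> {(u, v), (v, u)})\<^sup>*"
  have class_image: "?R' `` (?R `` {x}) = ?R' `` {x}" for x
    by (rule rtrancl_Image_rtrancl_Image) blast
  have "inj_on (Image ?R') (A // ?R - {?R `` {u}})"
  proof (rule inj_onI)
    fix C1 C2
    assume C1: "C1 \<in> A // ?R - {?R `` {u}}" and C2: "C2 \<in> A // ?R - {?R `` {u}}"
      and eq: "?R' `` C1 = ?R' `` C2"
    obtain x y where xy: "x \<in> A" "C1 = ?R `` {x}" "y \<in> A" "C2 = ?R `` {y}"
      using C1 C2 by (blast elim: quotientE)
    have "(x, u) \<notin> ?R" "(y, u) \<notin> ?R"
      using C1 C2 xy rtrancl_sym_Image_eq_iff[OF assms(2)] by simp_all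
    moreover have "(u, y) \<notin> ?R"
      using \<open>(y, u) \<notin> ?R\<close> symD[OF sym_rtrancl[OF assms(2)]] by blast
    moreover have "(x, y) \<in> ?R'"
      using eq xy class_image by blast
    ultimately have "(x, y) \<in> ?R"
      using rtrancl_insert_edge_cases[of x y r u v] by blast
    then show "C1 = C2"
      using xy rtrancl_sym_Image_eq_iff[OF assms(2)] by simp
  qed
  moreover have "Image ?R' ` (A // ?R - {?R `` {u}}) \<subseteq> A // ?R'"
  proof (rule image_subsetI)
    fix C assume "C \<in> A // ?R - {?R `` {u}}"
    then obtain x where "x \<in> A" "C = ?R `` {x}"
      by (blast elim: quotientE)
    then show "?R' `` C \<in> A // ?R'"
      using class_image quotientI by metis
  qed
  moreover have "finite (A // ?R')"
    using assms(1) by (simp add: quotient_def)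
  ultimately have "card (A // ?R - {?R `` {u}}) \<le> card (A // ?R')"
    by (rule card_inj_on_le)
  moreover have "card (A // ?R) \<le> card (A // ?R - {?R `` {u}}) + 1"
    by (cases "?R `` {u} \<in> A // ?R") (simp_all add: card_Diff_singleton)
  ultimately show ?thesis
    by linarith
qed

lemma inj_on_restrict_Image:
  "inj_on (\<lambda>g. \<lambda>x\<in>A. g (R `` {x})) (A // R \<rightarrow>\<^sub>E B)"
proof (rule inj_onI)
  fix g1 g2
  assume g: "g1 \<in> A // R \<rightarrow>\<^sub>E B" "g2 \<in> A // R \<rightarrow>\<^sub>E B"
    and eq: "(\<lambda>x\<in>A. g1 (R `` {x})) = (\<lambda>x\<in>A. g2 (R `` {x}))"
  have "g1 C = g2 C" for C
  proof (cases "C \<in> A // R")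
    case True
    then obtain x where "x \<in> A" "C = R `` {x}"
      by (rule quotientE)
    then show ?thesis
      using fun_cong[OF eq, of x] by simp
  qed (simp add: PiE_arb[OF g(1)] PiE_arb[OF g(2)])
  then show "g1 = g2"
    by (rule ext)
qed

lemma restrict_Image_image_eq_respecting:
  assumes "sym r" and "r \<subseteq> A \<times> A"
  shows "(\<lambda>g. \<lambda>x\<in>A. g (r\<^sup>* `` {x})) ` (A // r\<^sup>* \<rightarrow>\<^sub>E B) = {f \<in> A \<rightarrow>\<^sub>E B. \<forall>(x, y) \<in> r. f x = f y}"
    (is "?lift ` _ = ?F")
proof (intro equalityI subsetI)
  fix f assume "f \<in> ?lift ` (A // r\<^sup>* \<rightarrow>\<^sub>E B)"
  then obtain g where g: "g \<in> A // r\<^sup>* \<rightarrow>\<^sub>E B" "f = ?lift g"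
    by blast
  have "g (r\<^sup>* `` {x}) \<in> B" if "x \<in> A" for x
    using PiE_mem[OF g(1) quotientI[OF that]] .
  then have "f \<in> A \<rightarrow>\<^sub>E B"
    using g(2) by simp
  moreover have "f x = f y" if "(x, y) \<in> r" for x y
  proof -
    have "r\<^sup>* `` {x} = r\<^sup>* `` {y}"
      using that rtrancl_sym_Image_eq_iff[OF assms(1)] by (simp add: r_into_rtrancl)
    moreover have "x \<in> A" "y \<in> A"
      using that assms(2) by blast+
    ultimately show ?thesis
      using g(2) by simp
  qed
  ultimately show "f \<in> ?F"
    by blast
next
  fix f assume f: "f \<in> ?F"
  have class_value: "f ` (r\<^sup>* `` {x}) = {f x}" for x
  proof
    show "f ` (r\<^sup>* `` {x}) \<subseteq> {f x}"
      using f rtrancl_invariant[of r f x] by auto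
  qed simp
  define g where "g = (\<lambda>C\<in>A // r\<^sup>*. the_elem (f ` C))"
  have "g \<in> A // r\<^sup>* \<rightarrow>\<^sub>E B"
    unfolding g_def restrict_PiE_iff
  proof
    fix C assume "C \<in> A // r\<^sup>*"
    then obtain x where "x \<in> A" "C = r\<^sup>* `` {x}"
      by (rule quotientE)
    then show "the_elem (f ` C) \<in> B"
      using f class_value by auto
  qed
  moreover have "f = ?lift g"
  proof
    fix x show "f x = ?lift g x"
    proof (cases "x \<in> A")
      case False
      then show ?thesis
        using f PiE_arb[of f A "\<lambda>_. B" x] by simp
    qed (simp add: g_def class_value quotientI)
  qed
  ultimately show "f \<in> ?lift ` (A // r\<^sup>* \<rightarrow>\<^sub>E B)"
    by blast
qed

lemma card_PiE_respecting:
  assumes "finite A" and "sym r" and "r \<subseteq> A \<times> A"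
  shows "card {f \<in> A \<rightarrow>\<^sub>E B. \<forall>(x, y) \<in> r. f x = f y} = card B ^ card (A // r\<^sup>*)"
proof -
  have "card ((\<lambda>g. \<lambda>x\<in>A. g (r\<^sup>* `` {x})) ` (A // r\<^sup>* \<rightarrow>\<^sub>E B)) = card (A // r\<^sup>* \<rightarrow>\<^sub>E B)"
    by (rule card_image[OF inj_on_restrict_Image])
  then show ?thesis
    using assms(1) unfolding restrict_Image_image_eq_respecting[OF assms(2,3)]
    by (simp add: card_funcsetE quotient_def)
qed

lemma even_card_changes_bij:
  fixes P :: "'a \<Rightarrow> bool"
  assumes "finite D" and "bij_betw f D D"
  shows "even (card {d \<in> D. P d \<noteq> P (f d)})"
proof -
  let ?out = "{d \<in> D. P d \<and> \<not> P (f d)}" and ?in = "{d \<in> D. \<not> P d \<and> P (f d)}"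
    and ?stay = "{d \<in> D. P d \<and> P (f d)}"
  have finite: "finite ?out" "finite ?in" "finite ?stay"
    using assms(1) by simp_all
  have "f ` {d \<in> D. P (f d)} = {d \<in> D. P d}"
  proof
    show "f ` {d \<in> D. P (f d)} \<subseteq> {d \<in> D. P d}"
      using bij_betwE[OF assms(2)] by blast
    show "{d \<in> D. P d} \<subseteq> f ` {d \<in> D. P (f d)}"
    proof
      fix x assume x: "x \<in> {d \<in> D. P d}"
      then obtain d where "d \<in> D" "x = f d"
        using bij_betw_imp_surj_on[OF assms(2)] by blast
      with x show "x \<in> f ` {d \<in> D. P (f d)}" by blast
    qed
  qed
  then have "bij_betw f {d \<in> D. P (f d)} {d \<in> D. P d}"
    using bij_betw_subset[OF assms(2), of "{d \<in> D. P (f d)}"] by blast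
  then have "card {d \<in> D. P (f d)} = card {d \<in> D. P d}"
    by (rule bij_betw_same_card)
  moreover have "{d \<in> D. P d} = ?out \<union> ?stay" "{d \<in> D. P (f d)} = ?in \<union> ?stay"
    by blast+
  moreover have "card (?out \<union> ?stay) = card ?out + card ?stay"
    "card (?in \<union> ?stay) = card ?in + card ?stay"
    using finite by (blast intro: card_Un_disjoint)+
  ultimately have "card ?in = card ?out"
    by simp
  moreover have "{d \<in> D. P d \<noteq> P (f d)} = ?out \<union> ?in"
    by blast
  moreover have "card (?out \<union> ?in) = card ?out + card ?in"
    using finite by (blast intro: card_Un_disjoint)
  ultimately show ?thesis
    by simp
qed

lemma antimono_on_subsets_if_insert_le:
  fixes f :: "'a set \<Rightarrow> 'b::order"
  assumes "finite B" and insert_le: "\<And>X e. X \<subseteq> B \<Longrightarrow> e \<in> B - X \<Longrightarrow> f (insert e X) \<le> f X"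
    and "X \<subseteq> Y" and "Y \<subseteq> B"
  shows "f Y \<le> f X"
proof -
  have "f (X \<union> D) \<le> f X" if "finite D" "D \<subseteq> B - X" for D
    using that
  proof (induct D rule: finite_subset_induct')
    case (insert e D)
    then have "f (insert e (X \<union> D)) \<le> f (X \<union> D)"
      using \<open>Y \<subseteq> B\<close> assms(3) by (intro insert_le) auto
    with insert show ?case by simp
  qed (use assms(1) in auto)
  moreover have "finite (Y - X)" "Y - X \<subseteq> B - X"
    using assms(1,4) finite_subset[of "Y - X" B] by auto
  ultimately have "f (X \<union> (Y - X)) \<le> f X" by blast
  moreover have "X \<union> (Y - X) = Y"
    using assms(3) by blast
  ultimately show ?thesis by simp
qed

lemma prod_if_mem_eq_power:
  assumes "finite E" and "X \<subseteq> E"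
  shows "(\<Prod>e\<in>E. if e \<in> X then a else b) = a ^ card X * b ^ card (E - X)"
proof -
  have "E \<inter> {e. e \<in> X} = X" "E \<inter> - {e. e \<in> X} = E - X"
    using assms(2) by auto
  then show ?thesis
    using prod.If_cases[OF assms(1), of "\<lambda>e. e \<in> X" "\<lambda>_. a" "\<lambda>_. b"] by simp
qed

lemma normalised_eq_if_proportional:
  fixes f g :: "'a \<Rightarrow> 'b::field"
  assumes "\<forall>x \<in> A. f x = c * g x" and "c \<noteq> 0" and "x \<in> A"
  shows "f x / sum f A = g x / sum g A"
proof -
  have "sum f A = c * sum g A"
    using assms(1) by (simp add: sum_distrib_left)
  then show ?thesis
    using assms by simp
qed

lemma in_darts_iff [simp]: "(e, b) \<in> darts E \<longleftrightarrow> e \<in> E"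
  by (simp add: darts_def)

lemma map_alpha_apply [simp]: "map_alpha (e, b) = (e, \<not> b)"
  by (simp add: map_alpha_def)

lemma map_alpha_map_alpha [simp]: "map_alpha (map_alpha d) = d"
  by (simp add: map_alpha_def)

lemma face_perm_map_alpha: "face_perm s (map_alpha d) = s d"
  by (simp add: face_perm_def)

lemma self_in_orb: "x \<in> orb f x"
  unfolding orb_def by (metis funpow_0 rangeI)

lemma even_card_if_map_alpha_closed:
  assumes "finite X" and "map_alpha ` X \<subseteq> X"
  shows "even (card X)"
proof -
  have "X = fst ` X \<times> UNIV"
  proof (intro equalityI subsetI)
    fix d :: "'a \<times> bool" assume "d \<in> fst ` X \<times> UNIV"
    then obtain e b b' where "d = (e, b)" "(e, b') \<in> X"
      by force
    moreover have "map_alpha (e, b') \<in> X"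
      using subsetD[OF assms(2) imageI[OF \<open>(e, b') \<in> X\<close>]] .
    ultimately show "d \<in> X"
      by (cases "b = b'") auto
  qed force
  then have "card X = card (fst ` X \<times> (UNIV :: bool set))"
    by (rule arg_cong)
  then show ?thesis
    by (simp add: card_cartesian_product)
qed

lemma sym_adj: "sym (adj s \<omega>)"
  by (auto simp: adj_def sym_def)

lemma adj_insert: "adj s (insert e \<omega>) = adj s \<omega> \<union> {(src s e, tgt s e), (tgt s e, src s e)}"
  by (auto simp: adj_def)

lemma adj_dart: "e \<in> \<omega> \<Longrightarrow> (orb s (e, b), orb s (e, \<not> b)) \<in> adj s \<omega>"
  by (cases b) (auto simp: adj_def src_def tgt_def)

lemma adj_empty [simp]: "adj s {} = {}"
  by (simp add: adj_def)

lemma adjE: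
  assumes "(v, w) \<in> adj s \<omega>"
  obtains e b where "e \<in> \<omega>" "v = orb s (e, b)" "w = orb s (e, \<not> b)"
proof -
  consider e where "e \<in> \<omega>" "v = orb s (e, True)" "w = orb s (e, False)"
    | e where "e \<in> \<omega>" "v = orb s (e, False)" "w = orb s (e, True)"
    using assms unfolding adj_def src_def tgt_def by blast
  then show thesis
    by cases (use that in fastforce)+
qed

lemma ncomp_insert_if_connected:
  assumes "(src s e, tgt s e) \<in> (adj s \<omega>)\<^sup>*"
  shows "ncomp E s (insert e \<omega>) = ncomp E s \<omega>"
proof -
  have "(tgt s e, src s e) \<in> (adj s \<omega>)\<^sup>*"
    using assms sym_rtrancl[OF sym_adj] by (blast dest: symD)
  then have "(adj s (insert e \<omega>))\<^sup>* = (adj s \<omega>)\<^sup>*"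
    using assms unfolding adj_insert by (intro rtrancl_subset) auto
  then show ?thesis
    by (simp add: ncomp_def)
qed

lemma ncomp_empty: "ncomp E s {} = card (verts E s)"
proof -
  have "verts E s // Id = (\<lambda>x. {x}) ` verts E s"
    by (auto simp: quotient_def)
  then show ?thesis
    by (simp add: ncomp_def card_image)
qed

lemma etaD_eq_etaP_face_perm: "etaD E s = etaP E (face_perm s)"
  by (auto simp: etaD_def etaP_def lface_def rface_def src_def tgt_def fun_eq_iff)

lemma verts_face_perm: "verts E (face_perm s) = faces E s"
  by (simp add: verts_def faces_def)

lemma perc_cond_eq_0:
  assumes "finite E" and "etaP E s \<sigma> \<inter> etaD E s \<sigma>' = {}"
    and "\<not> (etaP E s \<sigma> \<inter> \<omega> = {} \<and> etaD E s \<sigma>' \<subseteq> \<omega>)"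
  shows "perc_cond a b E s \<sigma> \<sigma>' \<omega> = 0"
proof -
  obtain e where "e \<in> etaP E s \<sigma> \<inter> \<omega> \<or> e \<in> etaD E s \<sigma>' - \<omega>"
    using assms(3) by blast
  then have "e \<in> E" and "e \<in> etaD E s \<sigma>' \<longleftrightarrow> e \<notin> \<omega>" and "e \<in> etaP E s \<sigma> \<longleftrightarrow> e \<in> \<omega>"
    using assms(2) by (auto simp: etaP_def etaD_def)
  then show ?thesis
    unfolding perc_cond_def using assms(1) by (intro prod_zero) auto
qed

lemma spin_weight_mult_perc_cond:
  fixes a b :: real
  assumes "a + b = 1" and "finite E" and "\<omega> \<subseteq> E"
  shows "spin_weight a b E s \<sigma> \<sigma>' * perc_cond a b E s \<sigma> \<sigma>' \<omega> =
    (if etaP E s \<sigma> \<inter> \<omega> = {} \<and> etaD E s \<sigma>' \<subseteq> \<omega> then a ^ card \<omega> * b ^ card (E - \<omega>) else 0)"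
proof (cases "etaP E s \<sigma> \<inter> \<omega> = {} \<and> etaD E s \<sigma>' \<subseteq> \<omega>")
  case True
  let ?P = "etaP E s \<sigma>" and ?D = "etaD E s \<sigma>'"
  have "?P \<subseteq> E" "?D \<subseteq> E"
    by (auto simp: etaP_def etaD_def)
  with True have spin: "spin_weight a b E s \<sigma> \<sigma>' =
      (\<Prod>e\<in>E. (if e \<in> ?D then a else 1) * (if e \<in> ?P then b else 1))"
    using assms(2) by (auto simp: spin_weight_def prod.distrib prod_if_mem_eq_power)
  have "spin_weight a b E s \<sigma> \<sigma>' * perc_cond a b E s \<sigma> \<sigma>' \<omega> = (\<Prod>e\<in>E. if e \<in> \<omega> then a else b)"
    unfolding spin perc_cond_def prod.distrib[symmetric]
    using True assms(1) by (intro prod.cong) auto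
  then show ?thesis
    using True assms(2,3) by (simp add: prod_if_mem_eq_power)
next
  case False
  then show ?thesis
    using perc_cond_eq_0[OF assms(2) _ False] by (auto simp: spin_weight_def)
qed

locale comb_map =
  fixes E :: "'e set" and s :: "'e \<times> bool \<Rightarrow> 'e \<times> bool"
  assumes finite_edges: "finite E" and bij_darts: "bij_betw s (darts E) (darts E)"
begin

lemma finite_darts: "finite (darts E)"
  using finite_edges by (simp add: darts_def)

lemma finite_verts: "finite (verts E s)"
  using finite_darts by (simp add: verts_def)

lemma comb_map_face_perm: "comb_map E (face_perm s)"
proof
  have "bij_betw map_alpha (darts E) (darts E)"
    by (rule bij_betw_byWitness[where f' = map_alpha]) (auto simp: darts_def map_alpha_def)
  then show "bij_betw (face_perm s) (darts E) (darts E)"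
    unfolding face_perm_def using bij_darts by (rule bij_betw_trans)
qed (rule finite_edges)

lemma orb_apply:
  assumes "x \<in> darts E"
  shows "orb s (s x) = orb s x"
proof -
  let ?g = "perm_restrict s (darts E)"
  have "bij_betw ?g (darts E) (darts E)"
    using bij_darts by (rule bij_betw_cong[THEN iffD1, rotated]) (simp add: perm_restrict_def)
  then have "?g permutes darts E"
    by (rule bij_imp_permutes) (simp add: perm_restrict_def)
  then have perm: "permutation ?g"
    using finite_darts permutation_permutes by blast
  have funpow_in_darts: "(s ^^ n) y \<in> darts E" if "y \<in> darts E" for y n
    using that bij_betwE[OF bij_darts] by (induction n) auto
  have "(?g ^^ n) y = (s ^^ n) y" if "y \<in> darts E" for y n
    by (induction n) (simp_all add: perm_restrict_def funpow_in_darts[OF that])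
  then have orb_eq: "orb s y = orbit ?g y" if "y \<in> darts E" for y
    using that by (auto simp: orb_def orbit_altdef_permutation[OF perm])
  have "s x \<in> darts E"
    using assms bij_betwE[OF bij_darts] by blast
  then show ?thesis
    using assms orb_eq permutation_orbit_step[OF perm, of x] by (simp add: perm_restrict_def)
qed

lemma bij_betw_vertex_closed:
  "bij_betw s {d \<in> darts E. P (orb s d)} {d \<in> darts E. P (orb s d)}"
proof -
  let ?D = "{d \<in> darts E. P (orb s d)}"
  have "s ` ?D \<subseteq> ?D"
    using bij_betwE[OF bij_darts] orb_apply by auto
  moreover have "inj_on s ?D"
    using bij_betw_imp_inj_on[OF bij_darts] by (rule inj_on_subset) blast
  ultimately show ?thesis
    using endo_inj_surj[of ?D s] finite_darts by (simp add: bij_betw_def)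
qed

lemma orb_face_perm_apply:
  assumes "d \<in> darts E"
  shows "orb (face_perm s) (s d) = orb (face_perm s) (map_alpha d)"
proof -
  interpret dual: comb_map E "face_perm s"
    by (rule comb_map_face_perm)
  have "map_alpha d \<in> darts E"
    using assms by (cases d) simp
  then show ?thesis
    using dual.orb_apply[of "map_alpha d"] by (simp only: face_perm_map_alpha)
qed

lemma src_in_verts: "e \<in> E \<Longrightarrow> src s e \<in> verts E s"
  by (auto simp: verts_def src_def)

lemma tgt_in_verts: "e \<in> E \<Longrightarrow> tgt s e \<in> verts E s"
  by (auto simp: verts_def tgt_def)

lemma adj_subset: "\<omega> \<subseteq> E \<Longrightarrow> adj s \<omega> \<subseteq> verts E s \<times> verts E s"
  unfolding adj_def using src_in_verts tgt_in_verts by blast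

lemma ncomp_le_ncomp_insert: "e \<in> E \<Longrightarrow> ncomp E s \<omega> \<le> ncomp E s (insert e \<omega>) + 1"
  unfolding ncomp_def adj_insert
  by (rule card_quotient_le_insert_edge[OF finite_verts sym_adj src_in_verts])

lemma even_card_face_changes:
  fixes P Q :: "('e \<times> bool) set \<Rightarrow> bool"
  shows "even (card {d \<in> darts E. P (orb s d) \<and>
                 Q (orb (face_perm s) d) \<noteq> Q (orb (face_perm s) (map_alpha d))})"
proof -
  have "{d \<in> darts E. P (orb s d) \<and> Q (orb (face_perm s) d) \<noteq> Q (orb (face_perm s) (map_alpha d))}
      = {d \<in> {d \<in> darts E. P (orb s d)}. Q (orb (face_perm s) d) \<noteq> Q (orb (face_perm s) (s d))}"
    using orb_face_perm_apply by auto
  also have "even (card \<dots>)"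
    using even_card_changes_bij[OF _ bij_betw_vertex_closed[of P], of "\<lambda>d. Q (orb (face_perm s) d)"]
    by (simp add: finite_darts)
  finally show ?thesis .
qed

(* Parity argument: the vertex rotation permutes the darts at the cluster C of src e, so evenly
   many of them have their two sides separated by the dual cluster A of the left face of e. But
   edges of w contribute pairs of such darts, edges of E - w - e none, and e exactly (e, True). *)
lemma dual_connected_if_not_connected:
  assumes "e \<in> E" and "e \<notin> \<omega>"
    and not_connected: "(src s e, tgt s e) \<notin> (adj s \<omega>)\<^sup>*"
  shows "(src (face_perm s) e, tgt (face_perm s) e) \<in> (adj (face_perm s) (E - insert e \<omega>))\<^sup>*"
proof (rule ccontr)
  let ?\<phi> = "face_perm s" and ?S = "E - insert e \<omega>"
  assume not_dual_connected: "(src ?\<phi> e, tgt ?\<phi> e) \<notin> (adj ?\<phi> ?S)\<^sup>*"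
  define C where "C = (adj s \<omega>)\<^sup>* `` {src s e}"
  define A where "A = (adj ?\<phi> ?S)\<^sup>* `` {src ?\<phi> e}"
  define X where "X = {d \<in> darts E. orb s d \<in> C \<and> (orb ?\<phi> d \<in> A) \<noteq> (orb ?\<phi> (map_alpha d) \<in> A)}"
  have finite_X: "finite X"
    using finite_darts by (simp add: X_def)
  have C_closed: "orb s (e', \<not> b) \<in> C" if "orb s (e', b) \<in> C" "e' \<in> \<omega>" for e' b
    using that rtrancl_into_rtrancl[OF _ adj_dart[OF that(2)]] by (simp add: C_def)
  have A_closed: "orb ?\<phi> (e', \<not> b) \<in> A" if "orb ?\<phi> (e', b) \<in> A" "e' \<in> ?S" for e' b
    using that rtrancl_into_rtrancl[OF _ adj_dart[OF that(2)]] by (simp add: A_def)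
  have e_True: "(e, True) \<in> X"
    using \<open>e \<in> E\<close> not_dual_connected by (simp add: X_def C_def A_def src_def tgt_def)
  have "map_alpha ` (X - {(e, True)}) \<subseteq> X - {(e, True)}"
  proof (rule image_subsetI)
    fix d assume d: "d \<in> X - {(e, True)}"
    obtain e' b where d_eq: "d = (e', b)"
      by (cases d)
    from d have e': "e' \<in> E" "orb s (e', b) \<in> C" "(orb ?\<phi> (e', b) \<in> A) \<noteq> (orb ?\<phi> (e', \<not> b) \<in> A)"
      by (auto simp: X_def d_eq)
    have "e' \<noteq> e"
    proof
      assume "e' = e"
      with d d_eq e'(2) have "tgt s e \<in> C"
        by (auto simp: tgt_def)
      with not_connected show False
        by (simp add: C_def)
    qed
    moreover have "e' \<notin> ?S"
      using e'(3) A_closed[of e' b] A_closed[of e' "\<not> b"] by auto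
    ultimately have "e' \<in> \<omega>"
      using e'(1) by blast
    then show "map_alpha d \<in> X - {(e, True)}"
      using e' C_closed \<open>e \<notin> \<omega>\<close> by (auto simp: X_def d_eq)
  qed
  then have "even (card (X - {(e, True)}))"
    using finite_X by (intro even_card_if_map_alpha_closed) simp_all
  moreover have "card X = card (X - {(e, True)}) + 1"
    using card_Suc_Diff1[OF finite_X e_True] by simp
  moreover have "even (card X)"
    using even_card_face_changes[of "\<lambda>v. v \<in> C" "\<lambda>f. f \<in> A"] by (simp add: X_def)
  ultimately show False
    by simp
qed

lemma closed_dart_set_eq_darts:
  assumes connected: "ncomp E s E = 1" and "K \<subseteq> darts E" and "K \<noteq> {}"
    and alpha_closed: "map_alpha ` K \<subseteq> K" and s_closed: "s ` K \<subseteq> K"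
  shows "K = darts E"
proof -
  have orb_subset: "orb s d \<subseteq> K" if "d \<in> K" for d
  proof -
    have "(s ^^ n) d \<in> K" for n
      using that s_closed by (induction n) auto
    then show ?thesis
      by (auto simp: orb_def)
  qed
  obtain d0 where d0: "d0 \<in> K"
    using \<open>K \<noteq> {}\<close> by blast
  have reachable_subset: "v \<subseteq> K" if "(orb s d0, v) \<in> (adj s E)\<^sup>*" for v
    using that
  proof (induction rule: rtrancl_induct)
    case base
    show ?case using orb_subset[OF d0] .
  next
    case (step v w)
    from step.hyps(2) obtain e b where vw: "v = orb s (e, b)" "w = orb s (e, \<not> b)"
      by (rule adjE)
    then have "(e, b) \<in> K"
      using step.IH self_in_orb[of "(e, b)" s] by auto
    then have "map_alpha (e, b) \<in> K"
      using subsetD[OF alpha_closed imageI] by blast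
    then show ?case
      using orb_subset vw(2) by simp
  qed
  have orb_in_verts: "orb s d \<in> verts E s" if "d \<in> darts E" for d
    using that by (simp add: verts_def)
  have "\<forall>v \<in> verts E s. \<forall>w \<in> verts E s. (v, w) \<in> (adj s E)\<^sup>*"
    using connected unfolding ncomp_def card_quotient_rtrancl_eq_1_iff[OF sym_adj] by blast
  then have "orb s d \<subseteq> K" if "d \<in> darts E" for d
    using reachable_subset orb_in_verts[OF that] orb_in_verts[of d0] d0 \<open>K \<subseteq> darts E\<close> by blast
  then have "darts E \<subseteq> K"
    using self_in_orb by (metis subsetD subsetI)
  then show ?thesis
    using \<open>K \<subseteq> darts E\<close> by (rule equalityI[rotated])
qed

(* Since face_perm s (map_alpha d) = s d, the dual map is generated by the same two permutations
   of the darts, so it is connected as well. *)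
lemma face_perm_reachable:
  assumes connected: "ncomp E s E = 1" and "d0 \<in> darts E" and "d \<in> darts E"
  shows "(orb (face_perm s) d0, orb (face_perm s) d) \<in> (adj (face_perm s) E)\<^sup>*"
proof -
  let ?\<phi> = "face_perm s"
  define K where "K = {d \<in> darts E. (orb ?\<phi> d0, orb ?\<phi> d) \<in> (adj ?\<phi> E)\<^sup>*}"
  have alpha_closed: "map_alpha d \<in> K" if "d \<in> K" for d
  proof -
    obtain e b where "d = (e, b)"
      by (cases d)
    with that show ?thesis
      using rtrancl_into_rtrancl[OF _ adj_dart[of e E ?\<phi> b]] by (auto simp: K_def)
  qed
  have "K = darts E"
  proof (rule closed_dart_set_eq_darts[OF connected])
    have "d0 \<in> K"
      using \<open>d0 \<in> darts E\<close> by (simp add: K_def)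
    then show "K \<noteq> {}"
      by blast
    show "K \<subseteq> darts E"
      by (auto simp: K_def)
    show "map_alpha ` K \<subseteq> K"
      using alpha_closed by blast
    show "s ` K \<subseteq> K"
    proof (rule image_subsetI)
      fix d assume "d \<in> K"
      then have "d \<in> darts E" "map_alpha d \<in> K"
        using alpha_closed by (auto simp: K_def)
      then show "s d \<in> K"
        using orb_face_perm_apply bij_betwE[OF bij_darts] by (auto simp: K_def)
    qed
  qed
  with \<open>d \<in> darts E\<close> have "d \<in> K"
    by simp
  then show ?thesis
    by (simp add: K_def)
qed

lemma ncomp_face_perm_eq_1:
  assumes connected: "ncomp E s E = 1"
  shows "ncomp E (face_perm s) E = 1"
proof -
  have "darts E \<noteq> {}"
    using connected unfolding ncomp_def card_quotient_rtrancl_eq_1_iff[OF sym_adj]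
    by (simp add: verts_def)
  then show ?thesis
    using face_perm_reachable[OF connected]
    unfolding ncomp_def verts_face_perm card_quotient_rtrancl_eq_1_iff[OF sym_adj]
    by (auto simp: faces_def)
qed

lemma ncomp_dual_complement:
  assumes connected: "ncomp E s E = 1"
    and euler: "int (card (verts E s)) - int (card E) + int (card (faces E s)) = 2"
    and "\<omega> \<subseteq> E"
  shows "ncomp E (face_perm s) (E - \<omega>) + card (verts E s) = ncomp E s \<omega> + card \<omega> + 1"
proof -
  interpret dual: comb_map E "face_perm s"
    by (rule comb_map_face_perm)
  define \<Phi> where "\<Phi> \<omega> = int (ncomp E (face_perm s) (E - \<omega>)) - int (ncomp E s \<omega>) - int (card \<omega>)"
    for \<omega>
  have insert_le: "\<Phi> (insert e \<omega>) \<le> \<Phi> \<omega>" if \<omega>: "\<omega> \<subseteq> E" and e: "e \<in> E - \<omega>" for \<omega> e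
  proof -
    have complement: "E - \<omega> = insert e (E - insert e \<omega>)"
      using e by blast
    have "card (insert e \<omega>) = card \<omega> + 1"
      using \<omega> e finite_subset[OF \<omega> finite_edges] by simp
    moreover consider "(src s e, tgt s e) \<in> (adj s \<omega>)\<^sup>*"
      | "(src (face_perm s) e, tgt (face_perm s) e) \<in> (adj (face_perm s) (E - insert e \<omega>))\<^sup>*"
      using dual_connected_if_not_connected e by blast
    then have "int (ncomp E (face_perm s) (E - insert e \<omega>)) - int (ncomp E s (insert e \<omega>))
        \<le> int (ncomp E (face_perm s) (E - \<omega>)) - int (ncomp E s \<omega>) + 1"
    proof cases
      case 1
      have "ncomp E (face_perm s) (E - insert e \<omega>) \<le> ncomp E (face_perm s) (E - \<omega>) + 1"
        using dual.ncomp_le_ncomp_insert[of e "E - insert e \<omega>"] e by (simp flip: complement)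
      then show ?thesis
        using ncomp_insert_if_connected[OF 1] by simp
    next
      case 2
      have "ncomp E (face_perm s) (E - \<omega>) = ncomp E (face_perm s) (E - insert e \<omega>)"
        using ncomp_insert_if_connected[OF 2] by (simp flip: complement)
      then show ?thesis
        using ncomp_le_ncomp_insert[of e \<omega>] e by simp
    qed
    ultimately show ?thesis
      by (simp add: \<Phi>_def)
  qed
  have "\<Phi> E \<le> \<Phi> \<omega>" "\<Phi> \<omega> \<le> \<Phi> {}"
    using antimono_on_subsets_if_insert_le[OF finite_edges insert_le] \<open>\<omega> \<subseteq> E\<close> by auto
  moreover have "\<Phi> {} = 1 - int (card (verts E s))"
    using ncomp_face_perm_eq_1[OF connected] by (simp add: \<Phi>_def ncomp_empty)
  moreover have "\<Phi> E = 1 - int (card (verts E s))"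
    using connected euler by (simp add: \<Phi>_def ncomp_empty verts_face_perm)
  ultimately show ?thesis
    by (simp add: \<Phi>_def)
qed

lemma card_spins_constant_on_clusters:
  assumes "\<omega> \<subseteq> E"
  shows "card {\<sigma> \<in> verts E s \<rightarrow>\<^sub>E Q. etaP E s \<sigma> \<inter> \<omega> = {}} = card Q ^ ncomp E s \<omega>"
proof -
  have "etaP E s \<sigma> \<inter> \<omega> = {} \<longleftrightarrow> (\<forall>(v, w) \<in> adj s \<omega>. \<sigma> v = \<sigma> w)" for \<sigma>
    using assms by (auto simp: etaP_def adj_def)
  then show ?thesis
    using card_PiE_respecting[OF finite_verts sym_adj adj_subset[OF assms], of Q]
    by (simp add: ncomp_def)
qed

lemma joint_weight_eq:
  fixes Q Q' :: "complex set" and a b :: real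
  assumes "finite Q" and "finite Q'" and "a + b = 1" and "\<omega> \<subseteq> E"
  shows "joint_weight Q Q' a b E s \<omega> =
    real (card Q ^ ncomp E s \<omega>) * real (card Q' ^ ncomp E (face_perm s) (E - \<omega>)) *
    (a ^ card \<omega> * b ^ card (E - \<omega>))"
proof -
  interpret dual: comb_map E "face_perm s"
    by (rule comb_map_face_perm)
  let ?\<Sigma> = "verts E s \<rightarrow>\<^sub>E Q" and ?\<Sigma>' = "faces E s \<rightarrow>\<^sub>E Q'"
  have finite: "finite ?\<Sigma>" "finite ?\<Sigma>'"
    using finite_verts dual.finite_verts assms(1,2) by (simp_all add: finite_PiE verts_face_perm)
  have "etaD E s \<sigma>' \<subseteq> \<omega> \<longleftrightarrow> etaP E (face_perm s) \<sigma>' \<inter> (E - \<omega>) = {}" for \<sigma>'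
    by (auto simp: etaD_eq_etaP_face_perm etaP_def)
  then have dual_count: "card {\<sigma>' \<in> ?\<Sigma>'. etaD E s \<sigma>' \<subseteq> \<omega>} = card Q' ^ ncomp E (face_perm s) (E - \<omega>)"
    using dual.card_spins_constant_on_clusters[of "E - \<omega>" Q'] by (simp add: verts_face_perm)
  have "joint_weight Q Q' a b E s \<omega> = (\<Sum>\<sigma>\<in>?\<Sigma>. \<Sum>\<sigma>'\<in>?\<Sigma>'.
      of_bool (etaP E s \<sigma> \<inter> \<omega> = {}) * of_bool (etaD E s \<sigma>' \<subseteq> \<omega>) * (a ^ card \<omega> * b ^ card (E - \<omega>)))"
    unfolding joint_weight_def
    by (intro sum.cong refl) (simp add: spin_weight_mult_perc_cond[OF assms(3) finite_edges assms(4)])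
  also have "\<dots> = (\<Sum>\<sigma>\<in>?\<Sigma>. \<Sum>\<sigma>'\<in>?\<Sigma>'. of_bool (etaP E s \<sigma> \<inter> \<omega> = {}) * of_bool (etaD E s \<sigma>' \<subseteq> \<omega>)) *
      (a ^ card \<omega> * b ^ card (E - \<omega>))"
    by (simp add: sum_distrib_right)
  also have "\<dots> = (\<Sum>\<sigma>\<in>?\<Sigma>. of_bool (etaP E s \<sigma> \<inter> \<omega> = {})) * (\<Sum>\<sigma>'\<in>?\<Sigma>'. of_bool (etaD E s \<sigma>' \<subseteq> \<omega>)) *
      (a ^ card \<omega> * b ^ card (E - \<omega>))"
    by (simp only: sum_product)
  finally show ?thesis
    using card_spins_constant_on_clusters[OF assms(4), of Q] dual_count
    by (simp add: finite Collect_conj_eq)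
qed

end

lemma joint_weight_eq_scaled_fk_weight:
  fixes Q Q' :: "complex set" and a b :: real
  assumes spherical: "spherical_map E s" and "\<omega> \<subseteq> E"
    and "finite Q" and "finite Q'" and "Q' \<noteq> {}" and "0 < a" and "a + b = 1"
  shows "joint_weight Q Q' a b E s \<omega> =
    real (card Q') * (real (card Q') * a + b) ^ card E / real (card Q') ^ card (verts E s) *
    fk_weight (real (card Q * card Q')) (real (card Q') / (real (card Q') + 1 / a - 1)) E s \<omega>"
proof -
  interpret comb_map E s
    using spherical by unfold_locales (auto simp: spherical_map_def permutes_imp_bij)
  let ?q = "real (card Q)" and ?q' = "real (card Q')" and ?t = "real (card Q') * a + b"
  let ?k = "ncomp E s \<omega>" and ?k' = "ncomp E (face_perm s) (E - \<omega>)"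
    and ?m = "card \<omega>" and ?n = "card (E - \<omega>)" and ?V = "card (verts E s)"
  have dual: "?k' + ?V = ?k + ?m + 1"
    using spherical \<open>\<omega> \<subseteq> E\<close> by (intro ncomp_dual_complement) (auto simp: spherical_map_def)
  have edges: "?m + ?n = card E"
    using \<open>\<omega> \<subseteq> E\<close> finite_edges by (metis card_Diff_subset card_mono finite_subset le_add_diff_inverse)
  have "?q' \<ge> 1"
    using \<open>finite Q'\<close> \<open>Q' \<noteq> {}\<close> by (simp add: Suc_leI card_gt_0_iff)
  then have "a \<le> ?q' * a"
    using mult_right_mono[of 1 ?q' a] \<open>0 < a\<close> by simp
  then have "?t > 0"
    using \<open>0 < a\<close> \<open>a + b = 1\<close> by linarith
  have p: "?q' / (?q' + 1 / a - 1) = ?q' * a / ?t" and one_minus_p: "1 - ?q' * a / ?t = b / ?t"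
    using \<open>0 < a\<close> \<open>?t > 0\<close> \<open>a + b = 1\<close> by (simp_all add: field_simps)
  have "joint_weight Q Q' a b E s \<omega> * ?q' ^ ?V = ?q ^ ?k * ?q' ^ (?k' + ?V) * a ^ ?m * b ^ ?n"
    using joint_weight_eq[OF assms(3,4,7,2)] by (simp add: power_add)
  also have "\<dots> = ?q' * ?t ^ (?m + ?n) * ((?q * ?q') ^ ?k * (?q' * a / ?t) ^ ?m * (b / ?t) ^ ?n)"
    using \<open>?t > 0\<close> unfolding dual by (simp add: power_add power_mult_distrib field_simps)
  also have "\<dots> = ?q' * ?t ^ card E *
      fk_weight (real (card Q * card Q')) (?q' / (?q' + 1 / a - 1)) E s \<omega>"
    unfolding fk_weight_def p one_minus_p edges by simp
  finally show ?thesis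
    using \<open>?q' \<ge> 1\<close> by (simp add: field_simps)
qed

theorem proposition2p1:
  fixes E :: "'e set" and s :: "'e \<times> bool \<Rightarrow> 'e \<times> bool"
    and Q Q' :: "complex set" and q q' :: nat and a b :: real
  assumes "spherical_map E s"
    and "q \<ge> 1" and "q' \<ge> 1"
    and "finite Q" and "card Q = q" and "uminus ` Q = Q"
    and "finite Q'" and "card Q' = q'" and "uminus ` Q' = Q'"
    and "0 < a" and "a \<le> 1" and "0 < b" and "b \<le> 1" and "a + b = 1"
  shows "\<forall>\<omega> \<subseteq> E. omega_marginal Q Q' a b E s \<omega> =
           fk_law (real (q * q')) (real q' / (real q' + 1 / a - 1)) E s \<omega>"
proof (intro allI impI)
  fix \<omega> assume "\<omega> \<subseteq> E"
  define K where "K = real q' * (real q' * a + b) ^ card E / real q' ^ card (verts E s)"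
  have "real q' * a + b > 0"
    using \<open>q' \<ge> 1\<close> \<open>0 < a\<close> \<open>0 < b\<close> by (intro add_pos_pos mult_pos_pos) auto
  then have "K \<noteq> 0"
    using \<open>q' \<ge> 1\<close> by (simp add: K_def)
  have "Q' \<noteq> {}"
    using \<open>card Q' = q'\<close> \<open>q' \<ge> 1\<close> by auto
  then have proportional: "\<forall>\<omega>' \<in> Pow E. joint_weight Q Q' a b E s \<omega>' =
      K * fk_weight (real (q * q')) (real q' / (real q' + 1 / a - 1)) E s \<omega>'"
    using joint_weight_eq_scaled_fk_weight[OF \<open>spherical_map E s\<close> _ \<open>finite Q\<close> \<open>finite Q'\<close>]
      \<open>card Q = q\<close> \<open>card Q' = q'\<close> \<open>0 < a\<close> \<open>a + b = 1\<close> by (auto simp: K_def)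
  show "omega_marginal Q Q' a b E s \<omega> =
      fk_law (real (q * q')) (real q' / (real q' + 1 / a - 1)) E s \<omega>"
    unfolding omega_marginal_def fk_law_def
    using \<open>\<omega> \<subseteq> E\<close> \<open>K \<noteq> 0\<close> proportional by (intro normalised_eq_if_proportional) auto
qed

end
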